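(* Let $V_1$ and $V_2$ be near vector spaces over the same commutative $F$ (no finiteness assumption on the number of blocks). If $BT(V_1)=BT(V_2)$, then $\bar F\cap\mathrm{Aut}(V_1)=\bar F\cap\mathrm{Aut}(V_2)$, i.e. a formal sum $\alpha_1+_\cdot\cdots+_\cdot\alpha_n\in\bar F$ acts as an automorphism on $V_1$ if and only if it acts as an automorphism on $V_2$.
   Context: An F-group is a pair $(V,F)$ where $(V,+)$ is a group and $F$ is a set of endomorphisms of $V$ such that: the maps $0,1,-1$ lie in $F$; $F\setminus\{0\}$ is a subgroup of $\mathrm{Aut}(V,+)$ under composition; and if $\alpha x=\beta x$ with $\alpha,\beta\in F$, $x\in V$ then $\alpha=\beta$ or $x=0$. The quasi-kernel $Q(V)$ is the set of $u\in V$ such that for all $\alpha,\beta\in F$ there is $\gamma\in F$ with $\alpha u+\beta u=\gamma u$. $(V,F)$ is a near vector space if $Q(V)$ generates $(V,+)$; "over a commutative $F$" means $\alpha(\beta v)=\beta(\alpha v)$ for all $\alpha,\beta\in F$, $v\in V$. For $u\in Q(V)\setminus\{0\}$, $\alpha+_u\beta$ is the unique $\gamma$ with $\alpha u+\beta u=\gamma u$. Elements $u,v\in Q(V)$ are compatible if $u+\lambda v\in Q(V)$ for some $\lambda\in F\setminus\{0\}$. By André's decomposition theorem $V$ is the direct sum of maximal regular (all nonzero quasi-kernel elements pairwise compatible) near vector subspaces $B_i$, $i\in I$, each nonzero element of $Q(V)$ lying in exactly one $B_i$; these are the blocks. For commutative $F$, all nonzero $u\in Q(V)\cap B_i$ give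 the same operation $+_{u_i}$ and $B_i$ is a vector space over the field $(F,+_{u_i},\circ)$. The block type is $BT(V)=\{+_{u_i}: i\in I\}$, a set of binary operations on $F$ (equality of block types means equality of these sets of operations, not isomorphism). $\bar F$ is the set of formal finite sums $\alpha_1+_\cdot\cdots+_\cdot\alpha_n$ of elements of $F$, acting on $V$ by $(\alpha_1+_\cdot\cdots+_\cdot\alpha_n)(v)=\alpha_1(v)+\cdots+\alpha_n(v)$; $\bar F\cap\mathrm{Aut}(V)$ is the set of those formal sums acting on $V$ as automorphisms of $(V,+)$. *)

theory Defs
  imports Main
begin

(* The scalar set F is modelled abstractly: a carrier Fs :: 'f set with
   distinguished elements z (the map 0), e (the map 1), m (the map -1),
   a composition mult, and an action act :: 'f => 'v => 'v on the group V
   (the whole type 'v, a group under +).  "Over the same F" = same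
   (Fs, z, e, m, mult), possibly different actions on V1 and V2. *)

definition F_group ::
  "'f set \<Rightarrow> 'f \<Rightarrow> 'f \<Rightarrow> 'f \<Rightarrow> ('f \<Rightarrow> 'f \<Rightarrow> 'f)
   \<Rightarrow> ('f \<Rightarrow> 'v::group_add \<Rightarrow> 'v) \<Rightarrow> bool" where
  "F_group Fs z e m mult act \<longleftrightarrow>
     z \<in> Fs \<and> e \<in> Fs \<and> m \<in> Fs
   \<and> inj_on act Fs
   \<and> (\<forall>a\<in>Fs. \<forall>x y. act a (x + y) = act a x + act a y)
   \<and> (\<forall>v. act z v = 0) \<and> (\<forall>v. act e v = v) \<and> (\<forall>v. act m v = - v)
   \<and> (\<forall>a\<in>Fs - {z}. bij (act a))
   \<and> (\<forall>a\<in>Fs - {z}. \<forall>b\<in>Fs - {z}. mult a b \<in> Fs - {z})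
   \<and> (\<forall>a\<in>Fs. \<forall>b\<in>Fs. \<forall>v. act (mult a b) v = act a (act b v))
   \<and> (\<forall>a\<in>Fs - {z}. \<exists>b\<in>Fs - {z}. mult b a = e)
   \<and> (\<forall>a\<in>Fs. \<forall>b\<in>Fs. \<forall>x. act a x = act b x \<longrightarrow> a = b \<or> x = 0)"

definition quasi_kernel :: "'f set \<Rightarrow> ('f \<Rightarrow> 'v::group_add \<Rightarrow> 'v) \<Rightarrow> 'v set" where
  "quasi_kernel Fs act =
     {u. \<forall>a\<in>Fs. \<forall>b\<in>Fs. \<exists>c\<in>Fs. act a u + act b u = act c u}"

definition gen_subgroup :: "'v::group_add set \<Rightarrow> 'v set" where
  "gen_subgroup S = \<Inter>{H. S \<subseteq> H \<and> 0 \<in> H \<and> (\<forall>x\<in>H. \<forall>y\<in>H. x + y \<in> H)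
                          \<and> (\<forall>x\<in>H. - x \<in> H)}"

definition near_vector_space ::
  "'f set \<Rightarrow> 'f \<Rightarrow> 'f \<Rightarrow> 'f \<Rightarrow> ('f \<Rightarrow> 'f \<Rightarrow> 'f)
   \<Rightarrow> ('f \<Rightarrow> 'v::group_add \<Rightarrow> 'v) \<Rightarrow> bool" where
  "near_vector_space Fs z e m mult act \<longleftrightarrow>
     F_group Fs z e m mult act \<and> gen_subgroup (quasi_kernel Fs act) = UNIV"

definition commutative_F :: "'f set \<Rightarrow> ('f \<Rightarrow> 'v \<Rightarrow> 'v) \<Rightarrow> bool" where
  "commutative_F Fs act \<longleftrightarrow> (\<forall>a\<in>Fs. \<forall>b\<in>Fs. \<forall>v. act a (act b v) = act b (act a v))"

definition plus_u :: "'f set \<Rightarrow> ('f \<Rightarrow> 'v::group_add \<Rightarrow> 'v) \<Rightarrow> 'v \<Rightarrow> 'f \<Rightarrow> 'f \<Rightarrow> 'f" where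
  "plus_u Fs act u = (\<lambda>a b. if a \<in> Fs \<and> b \<in> Fs
        then (THE c. c \<in> Fs \<and> act a u + act b u = act c u) else undefined)"

(* block type: {+_{u_i} : i in I}; since each nonzero quasi-kernel element lies in
   exactly one block and all of them in a block give the same +_u, this is
   the set of all +_u with u in Q(V) \ {0}. *)
definition block_type :: "'f set \<Rightarrow> ('f \<Rightarrow> 'v::group_add \<Rightarrow> 'v) \<Rightarrow> ('f \<Rightarrow> 'f \<Rightarrow> 'f) set" where
  "block_type Fs act = {plus_u Fs act u | u. u \<in> quasi_kernel Fs act - {0}}"

(* action of a formal sum a1 +. ... +. an on V *)
definition fsum_act :: "('f \<Rightarrow> 'v::group_add \<Rightarrow> 'v) \<Rightarrow> 'f list \<Rightarrow> 'v \<Rightarrow> 'v" where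
  "fsum_act act as v = sum_list (map (\<lambda>a. act a v) as)"

definition is_aut :: "('v::group_add \<Rightarrow> 'v) \<Rightarrow> bool" where
  "is_aut f \<longleftrightarrow> bij f \<and> (\<forall>x y. f (x + y) = f x + f y)"

definition Fbar_Aut :: "'f set \<Rightarrow> ('f \<Rightarrow> 'v::group_add \<Rightarrow> 'v) \<Rightarrow> 'f list set" where
  "Fbar_Aut Fs act = {as. as \<noteq> [] \<and> set as \<subseteq> Fs \<and> is_aut (fsum_act act as)}"

end

theory Submission
  imports Defs
begin

(* Since -1 is an endomorphism, V is abelian. Call Q_type p the set of quasi-kernel
   elements u with +_u = p (together with 0); each Q_type p is an F-invariant subgroup,
   and V is their direct sum: Q generates V, and if a sum of elements of distinct Q_type p
   vanishes while some summand of type p is nonzero, the additive map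
   v |-> a v + b v - (a +_p b) v kills that summand and keeps the others in their Q_type,
   so by induction every other nonzero summand also has type p, which is absurd.
   On a nonzero u in Q_type p the formal sum a1 +. ... +. an acts as the scalar
   a1 +_p ... +_p an. Hence it is an automorphism iff none of these scalars is 0 for p in
   BT(V), a condition that only depends on BT(V). *)

lemma group_add_commute_of_minus_add:
  fixes x y :: "'a::group_add"
  assumes "\<And>x y :: 'a. - (x + y) = - x + - y"
  shows "x + y = y + x"
proof -
  have "x + y = - (- y + - x)" by (simp only: minus_add minus_minus)
  also have "\<dots> = y + x" by (simp only: assms minus_minus)
  finally show ?thesis .
qed

lemma additive_zero:
  fixes h :: "'a::group_add \<Rightarrow> 'b::group_add"
  assumes "\<And>x y. h (x + y) = h x + h y"
  shows "h 0 = 0"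
  using assms[of 0 0] by (metis add_0_right add_left_cancel)

lemma additive_minus:
  fixes h :: "'a::group_add \<Rightarrow> 'b::group_add"
  assumes "\<And>x y. h (x + y) = h x + h y"
  shows "h (- x) = - h x"
  using assms[of x "- x"] additive_zero[OF assms] by (metis minus_unique right_minus)

lemma gen_subgroup_least:
  assumes "S \<subseteq> H" "0 \<in> H" "\<And>x y. x \<in> H \<Longrightarrow> y \<in> H \<Longrightarrow> x + y \<in> H" "\<And>x. x \<in> H \<Longrightarrow> - x \<in> H"
  shows "gen_subgroup S \<subseteq> H"
  unfolding gen_subgroup_def using assms by (intro Inter_lower) blast

locale commutative_F_group =
  fixes Fs :: "'f set" and z e m :: 'f and mult :: "'f \<Rightarrow> 'f \<Rightarrow> 'f"
    and act :: "'f \<Rightarrow> 'v::group_add \<Rightarrow> 'v"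
  assumes F_group: "F_group Fs z e m mult act"
    and commutative: "commutative_F Fs act"
begin

lemma zero_in: "z \<in> Fs" and minus_one_in: "m \<in> Fs"
  and act_add: "a \<in> Fs \<Longrightarrow> act a (x + y) = act a x + act a y"
  and act_zero: "act z v = 0" and act_one: "act e v = v" and act_minus_one: "act m v = - v"
  and left_inverse_ex: "a \<in> Fs - {z} \<Longrightarrow> \<exists>b\<in>Fs - {z}. mult b a = e"
  and act_mult: "a \<in> Fs \<Longrightarrow> b \<in> Fs \<Longrightarrow> act (mult a b) v = act a (act b v)"
  and act_cancel: "a \<in> Fs \<Longrightarrow> b \<in> Fs \<Longrightarrow> act a x = act b x \<Longrightarrow> a = b \<or> x = 0"
  using F_group unfolding F_group_def by blast+

lemma act_commute: "a \<in> Fs \<Longrightarrow> b \<in> Fs \<Longrightarrow> act a (act b v) = act b (act a v)"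
  using commutative unfolding commutative_F_def by blast

lemma act_0: "a \<in> Fs \<Longrightarrow> act a 0 = 0"
  using additive_zero act_add by blast

lemma minus_add_distrib': "- (x + y) = - x + - (y :: 'v)"
  using act_add[OF minus_one_in] by (simp add: act_minus_one)

lemma add_commute: "x + y = y + (x :: 'v)"
  using minus_add_distrib' by (rule group_add_commute_of_minus_add)

sublocale V: comm_monoid_set "(+) :: 'v \<Rightarrow> 'v \<Rightarrow> 'v" 0
  by unfold_locales (simp_all add: add.assoc add_commute)

lemmas add_ac = add.assoc add_commute V.left_commute

lemma additive_F_commute:
  assumes "\<And>x y. h (x + y) = h x + h y"
  shows "h (V.F g P) = V.F (h \<circ> g) P"
proof (cases "finite P")
  case True
  then show ?thesis by (induction P rule: finite_induct) (simp_all add: assms additive_zero[OF assms])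
qed (simp add: additive_zero[OF assms])

abbreviation Q where "Q \<equiv> quasi_kernel Fs act"
abbreviation pu where "pu \<equiv> plus_u Fs act"

lemma plus_u_eqI:
  assumes "u \<noteq> 0" "a \<in> Fs" "b \<in> Fs" "c \<in> Fs" "act a u + act b u = act c u"
  shows "pu u a b = c"
proof -
  have "(THE c. c \<in> Fs \<and> act a u + act b u = act c u) = c"
    using assms act_cancel by (intro the_equality) auto
  then show ?thesis using assms by (simp add: plus_u_def)
qed

lemma plus_u:
  assumes "u \<in> Q" "u \<noteq> 0" "a \<in> Fs" "b \<in> Fs"
  shows "pu u a b \<in> Fs" and "act a u + act b u = act (pu u a b) u"
proof -
  obtain c where "c \<in> Fs" "act a u + act b u = act c u"
    using assms unfolding quasi_kernel_def by blast
  with plus_u_eqI[OF assms(2-4)] show "pu u a b \<in> Fs" "act a u + act b u = act (pu u a b) u"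
    by simp_all
qed

lemma plus_u_ext:
  assumes "\<And>a b. a \<in> Fs \<Longrightarrow> b \<in> Fs \<Longrightarrow> pu u a b = pu w a b"
  shows "pu u = pu w"
  using assms by (auto simp: plus_u_def fun_eq_iff)

lemma act_add_act:
  "a \<in> Fs \<Longrightarrow> b \<in> Fs \<Longrightarrow> l \<in> Fs \<Longrightarrow> act a (act l u) + act b (act l u) = act l (act a u + act b u)"
  by (simp add: act_add act_commute)

lemma plus_u_act:
  assumes "u \<in> Q" "l \<in> Fs" "act l u \<noteq> 0"
  shows "pu (act l u) = pu u"
proof (rule plus_u_ext)
  fix a b assume ab: "a \<in> Fs" "b \<in> Fs"
  have "u \<noteq> 0" using assms act_0 by auto
  have "act a (act l u) + act b (act l u) = act l (act a u + act b u)"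
    using ab assms(2) by (rule act_add_act)
  also have "\<dots> = act (pu u a b) (act l u)"
    using plus_u[OF assms(1) \<open>u \<noteq> 0\<close> ab] assms by (simp add: act_commute)
  finally show "pu (act l u) a b = pu u a b"
    using plus_u_eqI[OF assms(3) ab] plus_u[OF assms(1) \<open>u \<noteq> 0\<close> ab] by blast
qed

lemma quasi_kernel_zero: "0 \<in> Q"
  unfolding quasi_kernel_def using zero_in by (auto simp: act_0 act_zero)

lemma quasi_kernel_act:
  assumes "u \<in> Q" "l \<in> Fs"
  shows "act l u \<in> Q"
  unfolding quasi_kernel_def
proof (intro CollectI ballI)
  fix a b assume ab: "a \<in> Fs" "b \<in> Fs"
  then obtain c where c: "c \<in> Fs" "act a u + act b u = act c u"
    using assms unfolding quasi_kernel_def by blast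
  have "act a (act l u) + act b (act l u) = act l (act a u + act b u)"
    using ab assms(2) by (rule act_add_act)
  also have "\<dots> = act c (act l u)" using c assms by (simp add: act_commute)
  finally show "\<exists>c\<in>Fs. act a (act l u) + act b (act l u) = act c (act l u)" using c by blast
qed

definition Q_type :: "('f \<Rightarrow> 'f \<Rightarrow> 'f) \<Rightarrow> 'v set" where
  "Q_type p = {u \<in> Q. u = 0 \<or> pu u = p}"

lemma Q_type_zero: "0 \<in> Q_type p"
  using quasi_kernel_zero by (simp add: Q_type_def)

lemma Q_type_act: "u \<in> Q_type p \<Longrightarrow> l \<in> Fs \<Longrightarrow> act l u \<in> Q_type p"
  using quasi_kernel_act plus_u_act by (auto simp: Q_type_def act_0)

lemma Q_type_add:
  assumes u: "u \<in> Q_type p" and w: "w \<in> Q_type p"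
  shows "u + w \<in> Q_type p"
proof (cases "u = 0 \<or> w = 0")
  case True
  then show ?thesis using u w by auto
next
  case False
  then have "u \<in> Q" "u \<noteq> 0" "w \<in> Q" "w \<noteq> 0" "pu u = p" "pu w = p"
    using u w by (auto simp: Q_type_def)
  note pu_u = plus_u[OF \<open>u \<in> Q\<close> \<open>u \<noteq> 0\<close>] and pu_w = plus_u[OF \<open>w \<in> Q\<close> \<open>w \<noteq> 0\<close>]
  have sum: "act a (u + w) + act b (u + w) = act (pu u a b) (u + w)"
    if "a \<in> Fs" "b \<in> Fs" for a b
  proof -
    have "act a (u + w) + act b (u + w) = (act a u + act b u) + (act a w + act b w)"
      using that by (simp only: act_add add_ac)
    also have "\<dots> = act (pu u a b) (u + w)"
      using pu_u[OF that] pu_w[OF that] \<open>pu u = p\<close> \<open>pu w = p\<close> by (simp add: act_add)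
    finally show ?thesis .
  qed
  have "u + w \<in> Q"
    unfolding quasi_kernel_def using sum pu_u(1) by blast
  moreover have "pu (u + w) = p" if "u + w \<noteq> 0"
  proof -
    have "pu (u + w) = pu u"
      using plus_u_eqI[OF that _ _ pu_u(1) sum] by (intro plus_u_ext)
    then show ?thesis using \<open>pu u = p\<close> by simp
  qed
  ultimately show ?thesis unfolding Q_type_def by blast
qed

definition defect :: "'f \<Rightarrow> 'f \<Rightarrow> 'f \<Rightarrow> 'v \<Rightarrow> 'v" where
  "defect a b c v = act a v + act b v - act c v"

lemma defect_add:
  "a \<in> Fs \<Longrightarrow> b \<in> Fs \<Longrightarrow> c \<in> Fs \<Longrightarrow> defect a b c (x + y) = defect a b c x + defect a b c y"
  unfolding defect_def diff_conv_add_uminus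
  by (simp only: act_add minus_add_distrib' add_ac)

lemma defect_Q_type:
  assumes "a \<in> Fs" "b \<in> Fs" "c \<in> Fs" "u \<in> Q_type p"
  shows "defect a b c u \<in> Q_type p"
proof -
  have "- act c u = act m (act c u)" by (simp add: act_minus_one)
  then show ?thesis
    unfolding defect_def diff_conv_add_uminus using assms minus_one_in
    by (metis Q_type_act Q_type_add)
qed

lemma defect_eq_0_iff: "defect a b c u = 0 \<longleftrightarrow> act a u + act b u = act c u"
  by (simp add: defect_def)

lemma plus_u_eq_of_defect:
  assumes "u \<in> Q" "u \<noteq> 0" "v \<noteq> 0"
    and "\<And>a b. a \<in> Fs \<Longrightarrow> b \<in> Fs \<Longrightarrow> defect a b (pu u a b) v = 0"
  shows "pu v = pu u"
  using assms plus_u[OF assms(1,2)] plus_u_eqI[OF assms(3)]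
  by (intro plus_u_ext) (simp add: defect_eq_0_iff)

lemma Q_type_independent:
  assumes "finite P" "\<forall>p\<in>P. w p \<in> Q_type p" "V.F w P = 0"
  shows "\<forall>p\<in>P. w p = 0"
  using assms
proof (induction P arbitrary: w rule: finite_induct)
  case (insert p0 P)
  have "w p0 = 0"
  proof (rule ccontr)
    assume "w p0 \<noteq> 0"
    then have "w p0 \<in> Q" "pu (w p0) = p0"
      using insert.prems(1) by (auto simp: Q_type_def)
    have "defect a b (pu (w p0) a b) (w q) = 0" if "a \<in> Fs" "b \<in> Fs" "q \<in> P" for a b q
    proof -
      note c = plus_u[OF \<open>w p0 \<in> Q\<close> \<open>w p0 \<noteq> 0\<close> that(1,2)]
      let ?h = "defect a b (pu (w p0) a b)"
      have h_add: "?h (x + y) = ?h x + ?h y" for x y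
        using defect_add[OF that(1,2) c(1)] .
      have "?h (w p0) = 0" using c(2) by (simp add: defect_eq_0_iff)
      then have "V.F (?h \<circ> w) P = ?h (V.F w (insert p0 P))"
        using insert.hyps by (simp add: additive_F_commute[OF h_add] h_add)
      also have "\<dots> = 0"
        using insert.prems(2) additive_zero[OF h_add] by simp
      finally show ?thesis
        using insert.IH[of "?h \<circ> w"] insert.prems(1) defect_Q_type[OF that(1,2) c(1)] that(3)
        by simp
    qed
    then have "pu (w q) = p0" if "q \<in> P" "w q \<noteq> 0" for q
      using plus_u_eq_of_defect[OF \<open>w p0 \<in> Q\<close> \<open>w p0 \<noteq> 0\<close> that(2)] that(1) \<open>pu (w p0) = p0\<close>
      by simp
    moreover have "pu (w q) = q" if "q \<in> P" "w q \<noteq> 0" for q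
      using insert.prems(1) that by (auto simp: Q_type_def)
    ultimately have "V.F w P = 0"
      using insert.hyps(2) by (metis V.neutral)
    then show False using insert \<open>w p0 \<noteq> 0\<close> by simp
  qed
  with insert show ?case by auto
qed simp

abbreviation fs where "fs as \<equiv> fsum_act act as"

lemma fsum_act_add: "set as \<subseteq> Fs \<Longrightarrow> fs as (x + y) = fs as x + fs as y"
  by (induction as) (simp_all add: fsum_act_def act_add add_ac)

lemma fsum_act_act: "set as \<subseteq> Fs \<Longrightarrow> l \<in> Fs \<Longrightarrow> fs as (act l v) = act l (fs as v)"
  by (induction as) (simp_all add: fsum_act_def act_0 act_add act_commute)

lemma fsum_act_quasi_kernel:
  assumes "u \<in> Q" "u \<noteq> 0" "set as \<subseteq> Fs"
  shows "foldr (pu u) as z \<in> Fs \<and> fs as u = act (foldr (pu u) as z) u"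
  using assms(3)
proof (induction as)
  case (Cons a as)
  then show ?case using plus_u[OF assms(1,2), of a "foldr (pu u) as z"] by (simp add: fsum_act_def)
qed (simp add: fsum_act_def act_zero zero_in)

lemma fsum_act_eq_0_quasi_kernel:
  assumes "u \<in> Q" "set as \<subseteq> Fs"
  shows "fs as u = 0 \<longleftrightarrow> u = 0 \<or> foldr (pu u) as z = z"
proof (cases "u = 0")
  case True
  then show ?thesis using additive_zero[OF fsum_act_add[OF assms(2)]] by simp
next
  case False
  note c = fsum_act_quasi_kernel[OF assms(1) False assms(2)]
  have "act (foldr (pu u) as z) u = act z u \<longleftrightarrow> foldr (pu u) as z = z"
    using act_cancel[OF conjunct1[OF c] zero_in] False by auto
  then show ?thesis using c False by (simp add: act_zero)
qed

lemma fsum_act_Q_type: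
  assumes "u \<in> Q_type p" "set as \<subseteq> Fs"
  shows "fs as u \<in> Q_type p"
proof (cases "u = 0")
  case True
  then show ?thesis using additive_zero[OF fsum_act_add[OF assms(2)]] Q_type_zero by simp
next
  case False
  then show ?thesis
    using assms fsum_act_quasi_kernel[OF _ False assms(2)] Q_type_act by (auto simp: Q_type_def)
qed

end

locale commutative_near_vector_space = commutative_F_group +
  assumes generated: "gen_subgroup (quasi_kernel Fs act) = UNIV"
begin

lemma subgroup_containing_quasi_kernel:
  assumes "Q \<subseteq> H" "0 \<in> H" "\<And>x y. x \<in> H \<Longrightarrow> y \<in> H \<Longrightarrow> x + y \<in> H" "\<And>x. x \<in> H \<Longrightarrow> - x \<in> H"
  shows "H = UNIV"
  using gen_subgroup_least[OF assms] generated by blast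

lemma Q_type_decomposition: "\<exists>P w. finite P \<and> (\<forall>p\<in>P. w p \<in> Q_type p) \<and> v = V.F w P"
proof -
  let ?D = "{V.F w P | P w. finite P \<and> (\<forall>p\<in>P. w p \<in> Q_type p)}"
  have "u \<in> ?D" if "u \<in> Q" for u
  proof (cases "u = 0")
    case False
    then have "u \<in> Q_type (pu u)" using \<open>u \<in> Q\<close> by (simp add: Q_type_def)
    then show ?thesis by (intro CollectI exI[of _ "{pu u}"] exI[of _ "\<lambda>_. u"]) simp
  qed (auto intro!: exI[of _ "{}"])
  moreover have "0 \<in> ?D" by (auto intro!: exI[of _ "{}"])
  moreover have "x + y \<in> ?D" if xy: "x \<in> ?D" "y \<in> ?D" for x y
  proof -
    obtain P w P' w' where x: "x = V.F w P" "finite P" "\<forall>p\<in>P. w p \<in> Q_type p"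
      and y: "y = V.F w' P'" "finite P'" "\<forall>p\<in>P'. w' p \<in> Q_type p"
      using xy by blast
    let ?ext = "\<lambda>w P p. if p \<in> P then w p else 0"
    have ext: "V.F (?ext w P) (P \<union> P') = V.F w P" "V.F (?ext w' P') (P \<union> P') = V.F w' P'"
      using V.inter_restrict[of "P \<union> P'" w P] V.inter_restrict[of "P \<union> P'" w' P'] x(2) y(2)
      by (simp_all add: Int_absorb1 Int_absorb2)
    have "x + y = V.F (\<lambda>p. ?ext w P p + ?ext w' P' p) (P \<union> P')"
      unfolding V.distrib ext x(1) y(1) ..
    moreover have "\<forall>p\<in>P \<union> P'. ?ext w P p + ?ext w' P' p \<in> Q_type p"
      using x(3) y(3) Q_type_add Q_type_zero by simp
    ultimately show ?thesis using x(2) y(2) by blast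
  qed
  moreover have "- x \<in> ?D" if x_in: "x \<in> ?D" for x
  proof -
    obtain P w where x: "x = V.F w P" "finite P" "\<forall>p\<in>P. w p \<in> Q_type p"
      using x_in by blast
    have "- x = V.F (act m \<circ> w) P"
      using additive_F_commute[OF act_add[OF minus_one_in]] x(1) by (simp add: act_minus_one)
    moreover have "\<forall>p\<in>P. (act m \<circ> w) p \<in> Q_type p"
      using x(3) Q_type_act minus_one_in by simp
    ultimately show ?thesis using x(2) by blast
  qed
  ultimately have "?D = UNIV" by (intro subgroup_containing_quasi_kernel) blast+
  then show ?thesis by blast
qed

lemma fsum_act_surj:
  assumes "set as \<subseteq> Fs" and nonsingular: "\<forall>p\<in>block_type Fs act. foldr p as z \<noteq> z"
  shows "surj (fs as)"
proof -
  note fs_add = fsum_act_add[OF assms(1)]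
  have "u \<in> range (fs as)" if "u \<in> Q" "u \<noteq> 0" for u
  proof -
    define c where "c = foldr (pu u) as z"
    have "pu u \<in> block_type Fs act" using that unfolding block_type_def by blast
    then have "c \<in> Fs - {z}" "fs as u = act c u"
      using fsum_act_quasi_kernel[OF that assms(1)] nonsingular by (auto simp: c_def)
    then obtain d where d: "d \<in> Fs - {z}" "mult d c = e" using left_inverse_ex by blast
    have "fs as (act d u) = act d (act c u)"
      using fsum_act_act[OF assms(1)] d(1) \<open>fs as u = act c u\<close> by simp
    also have "\<dots> = u"
      using act_mult[of d c u] d \<open>c \<in> Fs - {z}\<close> by (simp add: act_one)
    finally show ?thesis by (metis rangeI)
  qed
  moreover have "0 \<in> range (fs as)" using additive_zero[OF fs_add] by (metis rangeI)
  moreover have "fs as x + fs as y \<in> range (fs as)" for x y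
    using fs_add[of x y] by (metis rangeI)
  moreover have "- fs as x \<in> range (fs as)" for x
    using additive_minus[OF fs_add, of x] by (metis rangeI)
  ultimately show ?thesis by (intro subgroup_containing_quasi_kernel) auto
qed

lemma fsum_act_kernel:
  assumes "set as \<subseteq> Fs" and nonsingular: "\<forall>p\<in>block_type Fs act. foldr p as z \<noteq> z"
    and "fs as v = 0"
  shows "v = 0"
proof -
  obtain P w where w: "finite P" "\<forall>p\<in>P. w p \<in> Q_type p" "v = V.F w P"
    using Q_type_decomposition by blast
  have "V.F (fs as \<circ> w) P = 0"
    using assms(3) w(3) by (simp add: additive_F_commute[OF fsum_act_add[OF assms(1)]])
  then have "\<forall>p\<in>P. fs as (w p) = 0"
    using Q_type_independent[OF w(1), of "fs as \<circ> w"] w(2) fsum_act_Q_type[OF _ assms(1)] by simp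
  moreover have "foldr (pu u) as z \<noteq> z" if "u \<in> Q" "u \<noteq> 0" for u
    using that nonsingular unfolding block_type_def by blast
  ultimately have "\<forall>p\<in>P. w p = 0"
    using w(2) fsum_act_eq_0_quasi_kernel[OF _ assms(1)] by (auto simp: Q_type_def)
  then show ?thesis using w(3) by (simp add: V.neutral)
qed

lemma is_aut_fsum_act_iff:
  assumes "set as \<subseteq> Fs"
  shows "is_aut (fs as) \<longleftrightarrow> (\<forall>p\<in>block_type Fs act. foldr p as z \<noteq> z)"
proof
  assume aut: "is_aut (fs as)"
  show "\<forall>p\<in>block_type Fs act. foldr p as z \<noteq> z"
  proof
    fix p assume "p \<in> block_type Fs act"
    then obtain u where u: "p = pu u" "u \<in> Q" "u \<noteq> 0" unfolding block_type_def by blast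
    have "fs as 0 = 0" using additive_zero[OF fsum_act_add[OF assms]] .
    moreover have "inj (fs as)" using aut by (simp add: is_aut_def bij_def)
    ultimately have "fs as u \<noteq> 0" using u(3) injD[of "fs as" u 0] by auto
    then show "foldr p as z \<noteq> z" using fsum_act_eq_0_quasi_kernel[OF u(2) assms] u(1) by simp
  qed
next
  assume nonsingular: "\<forall>p\<in>block_type Fs act. foldr p as z \<noteq> z"
  note fs_add = fsum_act_add[OF assms]
  have "inj (fs as)"
  proof (rule injI)
    fix x y assume "fs as x = fs as y"
    then have "fs as (x - y) = 0"
      using fs_add[of x "- y"] additive_minus[OF fs_add, of y] by simp
    then show "x = y" using fsum_act_kernel[OF assms nonsingular, of "x - y"] by simp
  qed
  then show "is_aut (fs as)"
    using fsum_act_surj[OF assms nonsingular] fs_add unfolding is_aut_def bij_def by blast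
qed

end

theorem mainTheorem8:
  fixes Fs :: "'f set" and z e m :: 'f and mult :: "'f \<Rightarrow> 'f \<Rightarrow> 'f"
    and act1 :: "'f \<Rightarrow> 'a::group_add \<Rightarrow> 'a"
    and act2 :: "'f \<Rightarrow> 'b::group_add \<Rightarrow> 'b"
  assumes "near_vector_space Fs z e m mult act1"
    and "near_vector_space Fs z e m mult act2"
    and "commutative_F Fs act1"
    and "commutative_F Fs act2"
    and "block_type Fs act1 = block_type Fs act2"
  shows "Fbar_Aut Fs act1 = Fbar_Aut Fs act2"
proof -
  interpret V1: commutative_near_vector_space Fs z e m mult act1
    using assms(1,3) by unfold_locales (simp_all add: near_vector_space_def)
  interpret V2: commutative_near_vector_space Fs z e m mult act2
    using assms(2,4) by unfold_locales (simp_all add: near_vector_space_def)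
  show ?thesis
    unfolding Fbar_Aut_def using V1.is_aut_fsum_act_iff V2.is_aut_fsum_act_iff assms(5) by auto
qed

end
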